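(* Let $A\in\mathbb{R}^{n\times n}$ be symmetric positive definite, $M_0\in\mathbb{R}^{n\times n}$, $R_0=I_n-AM_0$ and $G_0=-AR_0$. For $i\ge1$ let $\mathcal{K}_i(A^2,G_0)=\mathrm{span}\{G_0,A^2G_0,\dots,A^{2(i-1)}G_0\}$. Then a matrix $M_i\in M_0+\mathcal{K}_i(A^2,G_0)$ satisfies $R_i:=I_n-AM_i\perp\mathcal{K}_i(A^2,G_0)$ if and only if $$\|A^{-1}-M_i\|_{F,A}=\min_{M\in M_0+\mathcal{K}_i(A^2,G_0)}\|A^{-1}-M\|_{F,A}.$$ In particular, the NCG iterates (which satisfy the former condition) minimize the Frobenius $A$-norm of the error over $M_0+\mathcal{K}_i(A^2,G_0)$.
   Context: The Frobenius inner product is $(X,Y)_F=\operatorname{tr}(X^TY)$ and $\perp$ denotes orthogonality with respect to it. The Frobenius inner product weighted by $A$ is $(X,Y)_{F,A}:=(AX,Y)_F$, with induced norm $\|X\|_{F,A}:=(X,X)_{F,A}^{1/2}$. The NCG method: $R_i=I_n-AM_i$, $G_i=-AR_i$, $P_0=-G_0$; for $i\ge1$, $P_i\in -G_i+\mathrm{span}\{P_{i-1}\}$ with $(P_i,AP_{i-1})_F=0$; for $i\ge0$, $M_{i+1}\in M_i+\mathrm{span}\{P_i\}$ with $(R_{i+1},P_i)_F=0$ (no breakdown assumed). *)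

theory Defs
  imports "HOL-Analysis.Analysis"
begin

fun mat_pow :: "real^'n^'n \<Rightarrow> nat \<Rightarrow> real^'n^'n" where
  "mat_pow A 0 = mat 1"
| "mat_pow A (Suc k) = A ** mat_pow A k"

definition frob_inner :: "real^'n^'n \<Rightarrow> real^'n^'n \<Rightarrow> real" where
  "frob_inner X Y = trace (transpose X ** Y)"

definition frobA_inner :: "real^'n^'n \<Rightarrow> real^'n^'n \<Rightarrow> real^'n^'n \<Rightarrow> real" where
  "frobA_inner A X Y = frob_inner (A ** X) Y"

definition frobA_norm :: "real^'n^'n \<Rightarrow> real^'n^'n \<Rightarrow> real" where
  "frobA_norm A X = sqrt (frobA_inner A X X)"

definition spd :: "real^'n^'n \<Rightarrow> bool" where
  "spd A \<longleftrightarrow> transpose A = A \<and> (\<forall>x. x \<noteq> 0 \<longrightarrow> x \<bullet> (A *v x) > 0)"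

definition krylov :: "real^'n^'n \<Rightarrow> real^'n^'n \<Rightarrow> nat \<Rightarrow> (real^'n^'n) set" where
  "krylov B G i = span {mat_pow B k ** G | k. k < i}"

end

theory Submission
  imports Defs
begin

text \<open>
  The error \<open>E = A\<inverse> - M\<^sub>i\<close> satisfies \<open>A E = R\<^sub>i\<close>, so \<open>R\<^sub>i \<perp> K\<close> says exactly that \<open>E\<close> is
  orthogonal to \<open>K\<close> for the positive semidefinite form \<open>(\<cdot>,\<cdot>)\<^sub>F\<^sub>,\<^sub>A\<close>. Writing every competitor
  as \<open>A\<inverse> - M = E - D\<close> with \<open>D \<in> K\<close>, the identity
  \<open>\<parallel>E - D\<parallel>\<^sup>2 = \<parallel>E\<parallel>\<^sup>2 - 2 (E,D) + \<parallel>D\<parallel>\<^sup>2\<close> gives minimality from orthogonality, and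
  conversely minimality along the line \<open>t D\<close> forces \<open>2 t (E,D) \<le> t\<^sup>2 \<parallel>D\<parallel>\<^sup>2\<close> for all real
  \<open>t\<close>, hence \<open>(E,D) = 0\<close>.
\<close>

lemma linear_le_quadratic_imp_zero:
  fixes c q :: real
  assumes "\<And>t. 2 * t * c \<le> t\<^sup>2 * q"
  shows "c = 0"
proof (rule ccontr)
  assume "c \<noteq> 0"
  define s where "s = \<bar>q\<bar> + 1"
  define t where "t = c / s"
  have "s > 0" by (simp add: s_def)
  then have ts: "t * s = c" by (simp add: t_def)
  have "2 * c\<^sup>2 * s = 2 * (t * s) * c * s" by (simp add: ts power2_eq_square)
  also have "\<dots> = (2 * t * c) * s\<^sup>2" by (simp add: power2_eq_square)
  also have "\<dots> \<le> (t\<^sup>2 * q) * s\<^sup>2"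
    using assms[of t] by (simp add: mult_right_mono)
  also have "\<dots> = (t * s)\<^sup>2 * q" by (simp add: power_mult_distrib)
  also have "\<dots> \<le> c\<^sup>2 * \<bar>q\<bar>" by (simp add: ts mult_left_mono)
  finally have "c\<^sup>2 * (\<bar>q\<bar> + 2) \<le> 0" by (simp add: s_def algebra_simps)
  moreover have "c\<^sup>2 * (\<bar>q\<bar> + 2) > 0" using \<open>c \<noteq> 0\<close> by simp
  ultimately show False by linarith
qed

lemma orthogonal_subspace_iff_minimal:
  fixes b :: "'a::real_vector \<Rightarrow> 'a \<Rightarrow> real"
  assumes "bilinear b" and commute: "\<And>x y. b x y = b y x" and nonneg: "\<And>x. 0 \<le> b x x"
    and "subspace K"
  shows "(\<forall>d\<in>K. b e d = 0) \<longleftrightarrow> (\<forall>d\<in>K. b e e \<le> b (e - d) (e - d))"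
proof -
  have expand: "b (e - d) (e - d) = b e e - 2 * b e d + b d d" for d
    using commute[of d e] by (simp add: bilinear_lsub[OF assms(1)] bilinear_rsub[OF assms(1)])
  show ?thesis
  proof
    assume "\<forall>d\<in>K. b e d = 0"
    then show "\<forall>d\<in>K. b e e \<le> b (e - d) (e - d)"
      using nonneg by (simp add: expand)
  next
    assume min: "\<forall>d\<in>K. b e e \<le> b (e - d) (e - d)"
    show "\<forall>d\<in>K. b e d = 0"
    proof
      fix d assume "d \<in> K"
      have "2 * t * b e d \<le> t\<^sup>2 * b d d" for t
      proof -
        have "t *\<^sub>R d \<in> K" using \<open>d \<in> K\<close> \<open>subspace K\<close> by (simp add: subspace_scale)
        then have "b e e \<le> b (e - t *\<^sub>R d) (e - t *\<^sub>R d)" using min by blast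
        then show ?thesis
          by (simp add: expand bilinear_lmul[OF assms(1)] bilinear_rmul[OF assms(1)]
              power2_eq_square)
      qed
      then show "b e d = 0" by (rule linear_le_quadratic_imp_zero)
    qed
  qed
qed

lemma subspace_translation_shift:
  assumes "subspace K" and "k \<in> K"
  shows "(\<lambda>x. a + x) ` K = (\<lambda>x. (a + k) + x) ` K"
proof (intro subset_antisym image_subsetI)
  fix x assume "x \<in> K"
  then have "x - k \<in> K" using assms by (simp add: subspace_diff)
  then show "a + x \<in> (\<lambda>x. (a + k) + x) ` K" by (rule rev_image_eqI) simp
next
  fix x assume "x \<in> K"
  then have "k + x \<in> K" using assms by (simp add: subspace_add)
  then show "(a + k) + x \<in> (\<lambda>x. a + x) ` K" by (rule rev_image_eqI) (simp add: add.assoc)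
qed

lemma frob_inner_eq_inner: "frob_inner X Y = X \<bullet> Y"
  by (simp add: frob_inner_def trace_def matrix_matrix_mult_def transpose_def inner_vec_def
      mult.commute) (rule sum.swap)

lemma bilinear_frobA_inner: "bilinear (frobA_inner A)"
  unfolding bilinear_def frobA_inner_def frob_inner_eq_inner
  by (simp add: linear_iff inner_add_left inner_add_right matrix_add_ldistrib matrix_scalar_ac
      scalar_matrix_assoc[symmetric])

lemma frobA_inner_commute:
  assumes "transpose A = A"
  shows "frobA_inner A X Y = frobA_inner A Y X"
proof -
  have "frobA_inner A X Y = trace (transpose X ** (A ** Y))"
    unfolding frobA_inner_def frob_inner_def
    by (simp add: matrix_transpose_mul assms matrix_mul_assoc)
  also have "\<dots> = frobA_inner A Y X"
    by (simp add: frobA_inner_def frob_inner_def[symmetric] frob_inner_eq_inner inner_commute)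
  finally show ?thesis .
qed

lemma frobA_inner_self_nonneg:
  assumes "spd A"
  shows "0 \<le> frobA_inner A X X"
proof -
  define x where "x j = (\<chi> k. X$k$j)" for j
  have "frobA_inner A X X = (\<Sum>j\<in>UNIV. x j \<bullet> (A *v x j))"
    unfolding frobA_inner_def frob_inner_def x_def
    by (simp add: trace_def transpose_def inner_vec_def matrix_matrix_mult_def
        matrix_vector_mult_def mult.commute)
  also have "\<dots> \<ge> 0"
  proof (rule sum_nonneg)
    fix j
    show "0 \<le> x j \<bullet> (A *v x j)"
      using assms unfolding spd_def by (cases "x j = 0") (auto intro: less_imp_le)
  qed
  finally show ?thesis .
qed

lemma spd_invertible:
  assumes "spd A"
  shows "invertible A"
proof -
  have "x = 0" if "A *v x = 0" for x
    using assms that unfolding spd_def by force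
  then show ?thesis
    using invertible_left_inverse matrix_left_invertible_ker by blast
qed

lemma matrix_mul_matrix_inv:
  assumes "invertible A"
  shows "A ** matrix_inv A = mat 1"
  using assms unfolding invertible_def matrix_inv_def by (rule someI_ex[THEN conjunct1])

theorem theorem3:
  fixes A M0 Mi :: "real^'n^'n" and i :: nat
  assumes "spd A"
    and "i \<ge> 1"
    and "Mi \<in> (\<lambda>K. M0 + K) ` krylov (A ** A) (- A ** (mat 1 - A ** M0)) i"
  shows "(\<forall>X \<in> krylov (A ** A) (- A ** (mat 1 - A ** M0)) i.
            frob_inner (mat 1 - A ** Mi) X = 0)
     \<longleftrightarrow> (\<forall>M \<in> (\<lambda>K. M0 + K) ` krylov (A ** A) (- A ** (mat 1 - A ** M0)) i.
            frobA_norm A (matrix_inv A - Mi) \<le> frobA_norm A (matrix_inv A - M))"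
proof -
  define K where "K = krylov (A ** A) (- A ** (mat 1 - A ** M0)) i"
  define E where "E = matrix_inv A - Mi"
  have "subspace K" unfolding K_def krylov_def by (rule subspace_span)
  obtain Ki where "Ki \<in> K" and Mi: "Mi = M0 + Ki" using assms(3) unfolding K_def by blast
  have "A ** E + A ** Mi = mat 1"
    using matrix_mul_matrix_inv[OF spd_invertible[OF assms(1)]]
    by (simp add: E_def matrix_add_ldistrib[symmetric])
  then have residual: "frob_inner (mat 1 - A ** Mi) X = frobA_inner A E X" for X
    by (simp add: frobA_inner_def eq_diff_eq[symmetric])
  have "(\<lambda>K. M0 + K) ` K = (\<lambda>D. Mi + D) ` K"
    unfolding Mi using \<open>subspace K\<close> \<open>Ki \<in> K\<close> by (rule subspace_translation_shift)
  then have competitors: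
    "(\<forall>M \<in> (\<lambda>K. M0 + K) ` K. P (matrix_inv A - M)) \<longleftrightarrow> (\<forall>D\<in>K. P (E - D))" for P
    by (simp add: E_def diff_diff_eq)
  have "(\<forall>X\<in>K. frob_inner (mat 1 - A ** Mi) X = 0) \<longleftrightarrow> (\<forall>X\<in>K. frobA_inner A E X = 0)"
    by (simp add: residual)
  also have "\<dots> \<longleftrightarrow> (\<forall>D\<in>K. frobA_inner A E E \<le> frobA_inner A (E - D) (E - D))"
    using \<open>spd A\<close> \<open>subspace K\<close>
    by (intro orthogonal_subspace_iff_minimal bilinear_frobA_inner frobA_inner_commute
        frobA_inner_self_nonneg) (auto simp: spd_def)
  also have "\<dots> \<longleftrightarrow> (\<forall>D\<in>K. frobA_norm A E \<le> frobA_norm A (E - D))"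
    by (simp add: frobA_norm_def)
  also have "\<dots> \<longleftrightarrow> (\<forall>M \<in> (\<lambda>K. M0 + K) ` K. frobA_norm A E \<le> frobA_norm A (matrix_inv A - M))"
    by (rule competitors[symmetric])
  finally show ?thesis unfolding K_def E_def .
qed

end
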